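(* Let $K_m$ and $L_n$ be regular languages over the same alphabet $\Sigma$ with state complexities $m$ and $n$ respectively. Then the state complexity of $K_m^R\setminus L_n^R$ is at most $(2^m-1)(2^n-1)+1$, and the state complexity of $K_m^R\oplus L_n^R$ is at most $2^{m+n-1}$.
   Context: The state complexity of a regular language is the number of states of its minimal complete DFA. $L^R$ denotes the reversal of $L$; $\setminus$ is set difference and $\oplus$ is symmetric difference. *)

theory Defs
  imports Main
begin

definition is_dfa :: "'a set \<Rightarrow> nat \<Rightarrow> nat \<Rightarrow> (nat \<Rightarrow> 'a \<Rightarrow> nat) \<Rightarrow> nat set \<Rightarrow> bool" where
  "is_dfa Al n q0 delta F \<longleftrightarrow>
     q0 < n \<and> F \<subseteq> {0..<n} \<and> (\<forall>q<n. \<forall>a\<in>Al. delta q a < n)"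

definition dfa_lang :: "'a set \<Rightarrow> nat \<Rightarrow> (nat \<Rightarrow> 'a \<Rightarrow> nat) \<Rightarrow> nat set \<Rightarrow> 'a list set" where
  "dfa_lang Al q0 delta F = {w \<in> lists Al. foldl delta q0 w \<in> F}"

definition accepted_with :: "'a set \<Rightarrow> nat \<Rightarrow> 'a list set \<Rightarrow> bool" where
  "accepted_with Al n L \<longleftrightarrow>
     (\<exists>q0 delta F. is_dfa Al n q0 delta F \<and> dfa_lang Al q0 delta F = L)"

definition regular_lang :: "'a set \<Rightarrow> 'a list set \<Rightarrow> bool" where
  "regular_lang Al L \<longleftrightarrow> (\<exists>n. accepted_with Al n L)"

definition state_complexity :: "'a set \<Rightarrow> 'a list set \<Rightarrow> nat" where
  "state_complexity Al L = (LEAST n. accepted_with Al n L)"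

definition lang_rev :: "'a list set \<Rightarrow> 'a list set" where
  "lang_rev L = rev ` L"

definition sym_diff :: "'b set \<Rightarrow> 'b set \<Rightarrow> 'b set" where
  "sym_diff A B = (A - B) \<union> (B - A)"

end

theory Submission
  imports Defs
begin

(* A word u belongs to (L(A))^R iff the initial state of A lies in the set of
   states from which rev u leads to acceptance.  That set evolves letter by letter by taking
   preimages under the transition function (the subset construction for the reversed
   automaton).  Running this construction for the DFAs of K and L in parallel gives a DFA
   for any Boolean combination of K^R and L^R with states in Pow {0..<m} x Pow {0..<n};
   both bounds come from identifying pairs that behave the same:
   - for K^R - L^R, all pairs with S = {} or T = {0..<n} are rejecting forever and collapse
     into one sink, leaving (2^m - 1)(2^n - 1) + 1 states;
   - for K^R (+) L^R, complementing both components commutes with preimages and preserves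
     acceptance, so each pair is identified with the one whose first component contains the
     initial state of K, leaving 2^(m-1) * 2^n states. *)

lemma accepted_with_card:
  assumes fin: "finite Q" and q0: "q0 \<in> Q"
    and closed: "\<And>q a. q \<in> Q \<Longrightarrow> a \<in> Al \<Longrightarrow> D q a \<in> Q"
  shows "accepted_with Al (card Q) {w \<in> lists Al. foldl D q0 w \<in> F}"
proof -
  obtain f where f: "bij_betw f Q {0..<card Q}"
    using ex_bij_betw_finite_nat[OF fin] by blast
  define g where "g = inv_into Q f"
  have g_f: "g (f q) = q" if "q \<in> Q" for q
    using f that unfolding g_def by (simp add: bij_betw_def)
  have g_into: "g i \<in> Q" if "i < card Q" for i
    using f that unfolding g_def by (metis atLeastLessThan_iff bij_betw_def inv_into_into zero_le)
  have f_into: "f q < card Q" if "q \<in> Q" for q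
    using f that by (auto simp: bij_betw_def)
  define d where "d = (\<lambda>i a. f (D (g i) a))"
  have run: "foldl d (f q) w = f (foldl D q w) \<and> foldl D q w \<in> Q"
    if "w \<in> lists Al" "q \<in> Q" for w q
    using that by (induction w arbitrary: q) (simp_all add: d_def g_f closed)
  have dfa: "is_dfa Al (card Q) (f q0) d (f ` (F \<inter> Q))"
    unfolding is_dfa_def d_def using f_into q0 g_into closed by auto
  have "foldl d (f q0) w \<in> f ` (F \<inter> Q) \<longleftrightarrow> foldl D q0 w \<in> F" if "w \<in> lists Al" for w
    using run[OF that q0] bij_betw_imp_inj_on[OF f] by (auto dest: inj_onD)
  then have "dfa_lang Al (f q0) d (f ` (F \<inter> Q)) = {w \<in> lists Al. foldl D q0 w \<in> F}"
    unfolding dfa_lang_def by auto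
  with dfa show ?thesis unfolding accepted_with_def by blast
qed

lemma state_complexity_le: "accepted_with Al k L \<Longrightarrow> state_complexity Al L \<le> k"
  unfolding state_complexity_def by (rule Least_le)

lemma accepted_with_state_complexity:
  "regular_lang Al L \<Longrightarrow> accepted_with Al (state_complexity Al L) L"
  unfolding regular_lang_def state_complexity_def by (metis LeastI)

lemma state_complexity_le_tracking:
  assumes fin: "finite Q" and h_nil: "h [] \<in> Q"
    and closed: "\<And>q a. q \<in> Q \<Longrightarrow> a \<in> Al \<Longrightarrow> D q a \<in> Q"
    and h_snoc: "\<And>u a. u \<in> lists Al \<Longrightarrow> a \<in> Al \<Longrightarrow> h (u @ [a]) = D (h u) a"
    and words: "L' \<subseteq> lists Al"
    and decides: "\<And>u. u \<in> lists Al \<Longrightarrow> u \<in> L' \<longleftrightarrow> P (h u)"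
  shows "state_complexity Al L' \<le> card Q"
proof -
  have run: "foldl D (h []) w = h w" if "w \<in> lists Al" for w
    using that by (induction w rule: rev_induct) (simp_all add: h_snoc)
  have "w \<in> L' \<longleftrightarrow> w \<in> {w \<in> lists Al. foldl D (h []) w \<in> Collect P}" for w
    by (cases "w \<in> lists Al") (use words decides run in auto)
  then have "L' = {w \<in> lists Al. foldl D (h []) w \<in> Collect P}"
    by blast
  then show ?thesis
    using state_complexity_le[OF accepted_with_card[where F = "Collect P", OF fin h_nil closed]]
    by simp
qed

definition rev_states :: "nat \<Rightarrow> (nat \<Rightarrow> 'a \<Rightarrow> nat) \<Rightarrow> nat set \<Rightarrow> 'a list \<Rightarrow> nat set" where
  "rev_states n \<delta> F u = {q. q < n \<and> foldl \<delta> q (rev u) \<in> F}"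

(* Preimage of a set of states under the letter a: the transition of the reversed DFA. *)
definition pre_states :: "nat \<Rightarrow> (nat \<Rightarrow> 'a \<Rightarrow> nat) \<Rightarrow> nat set \<Rightarrow> 'a \<Rightarrow> nat set" where
  "pre_states n \<delta> S a = {q. q < n \<and> \<delta> q a \<in> S}"

lemma rev_states_subset: "rev_states n \<delta> F u \<subseteq> {0..<n}"
  unfolding rev_states_def by auto

lemma pre_states_subset: "pre_states n \<delta> S a \<subseteq> {0..<n}"
  unfolding pre_states_def by auto

lemma rev_states_snoc:
  assumes "is_dfa Al n q0 \<delta> F" and "a \<in> Al"
  shows "rev_states n \<delta> F (u @ [a]) = pre_states n \<delta> (rev_states n \<delta> F u) a"
  using assms unfolding rev_states_def pre_states_def is_dfa_def by auto

lemma mem_lang_rev_iff: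
  assumes "is_dfa Al n q0 \<delta> F" and "u \<in> lists Al"
  shows "u \<in> lang_rev (dfa_lang Al q0 \<delta> F) \<longleftrightarrow> q0 \<in> rev_states n \<delta> F u"
proof -
  have "u \<in> lang_rev (dfa_lang Al q0 \<delta> F) \<longleftrightarrow> rev u \<in> dfa_lang Al q0 \<delta> F"
    unfolding lang_rev_def by (metis image_iff rev_rev_ident)
  then show ?thesis
    using assms unfolding dfa_lang_def rev_states_def is_dfa_def by auto
qed

lemma lang_rev_words: "lang_rev (dfa_lang Al q0 \<delta> F) \<subseteq> lists Al"
  unfolding lang_rev_def dfa_lang_def by auto

lemma pre_states_empty: "pre_states n \<delta> {} a = {}"
  unfolding pre_states_def by auto

lemma pre_states_all:
  "is_dfa Al n q0 \<delta> F \<Longrightarrow> a \<in> Al \<Longrightarrow> pre_states n \<delta> {0..<n} a = {0..<n}"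
  unfolding pre_states_def is_dfa_def by auto

lemma pre_states_complement:
  "is_dfa Al n q0 \<delta> F \<Longrightarrow> a \<in> Al \<Longrightarrow>
     pre_states n \<delta> ({0..<n} - S) a = {0..<n} - pre_states n \<delta> S a"
  unfolding pre_states_def is_dfa_def by auto

definition pre_pair :: "nat \<Rightarrow> (nat \<Rightarrow> 'a \<Rightarrow> nat) \<Rightarrow> nat \<Rightarrow> (nat \<Rightarrow> 'a \<Rightarrow> nat) \<Rightarrow>
    nat set \<times> nat set \<Rightarrow> 'a \<Rightarrow> nat set \<times> nat set" where
  "pre_pair m \<delta> n \<gamma> ST a = (pre_states m \<delta> (fst ST) a, pre_states n \<gamma> (snd ST) a)"

lemma state_complexity_le_rev_pair:
  assumes dK: "is_dfa Al m q0 \<delta> F" and dL: "is_dfa Al n p0 \<gamma> G"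
    and fin: "finite Q"
    and into: "\<And>S T. S \<subseteq> {0..<m} \<Longrightarrow> T \<subseteq> {0..<n} \<Longrightarrow> nrm (S, T) \<in> Q"
    and compatible: "\<And>S T a. S \<subseteq> {0..<m} \<Longrightarrow> T \<subseteq> {0..<n} \<Longrightarrow> a \<in> Al \<Longrightarrow>
       nrm (pre_pair m \<delta> n \<gamma> (nrm (S, T)) a) = nrm (pre_pair m \<delta> n \<gamma> (S, T) a)"
    and words: "L' \<subseteq> lists Al"
    and decides: "\<And>u. u \<in> lists Al \<Longrightarrow>
       u \<in> L' \<longleftrightarrow> P (nrm (rev_states m \<delta> F u, rev_states n \<gamma> G u))"
  shows "state_complexity Al L' \<le> card Q"
proof (rule state_complexity_le_tracking[where h = "\<lambda>u. nrm (rev_states m \<delta> F u, rev_states n \<gamma> G u)"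
      and D = "\<lambda>ST a. nrm (pre_pair m \<delta> n \<gamma> ST a)" and P = P, OF fin _ _ _ words decides])
  show "nrm (rev_states m \<delta> F [], rev_states n \<gamma> G []) \<in> Q"
    by (rule into[OF rev_states_subset rev_states_subset])
  show "nrm (pre_pair m \<delta> n \<gamma> q a) \<in> Q" for q a
    unfolding pre_pair_def by (rule into[OF pre_states_subset pre_states_subset])
  show "nrm (rev_states m \<delta> F (u @ [a]), rev_states n \<gamma> G (u @ [a])) =
      nrm (pre_pair m \<delta> n \<gamma> (nrm (rev_states m \<delta> F u, rev_states n \<gamma> G u)) a)" if "a \<in> Al" for u a
    using compatible[OF rev_states_subset[of m \<delta> F u] rev_states_subset[of n \<gamma> G u] that]
    by (simp add: rev_states_snoc[OF dK that] rev_states_snoc[OF dL that] pre_pair_def)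
qed

(* Every pair that can no longer reach acceptance for K^R - L^R is sent to one sink. *)
definition diff_nrm :: "nat \<Rightarrow> nat set \<times> nat set \<Rightarrow> nat set \<times> nat set" where
  "diff_nrm n ST = (if fst ST = {} \<or> snd ST = {0..<n} then ({}, {0..<n}) else ST)"

lemma card_diff_states:
  "card ((Pow {0..<m} - {{}}) \<times> (Pow {0..<n} - {{0..<n}}) \<union> {({}, {0..<n})})
     = (2^m - 1) * (2^n - 1) + 1"
proof -
  have "card ((Pow {0..<m} - {{}}) \<times> (Pow {0..<n} - {{0..<n}})) = (2^m - 1) * (2^n - 1)"
    by (simp add: card_cartesian_product card_Diff_singleton card_Pow)
  then show ?thesis by simp
qed

lemma state_complexity_rev_diff:
  assumes dK: "is_dfa Al m q0 \<delta> F" and dL: "is_dfa Al n p0 \<gamma> G"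
  shows "state_complexity Al (lang_rev (dfa_lang Al q0 \<delta> F) - lang_rev (dfa_lang Al p0 \<gamma> G))
           \<le> (2^m - 1) * (2^n - 1) + 1"
proof -
  have p0: "p0 \<in> {0..<n}" using dL by (simp add: is_dfa_def)
  have "state_complexity Al (lang_rev (dfa_lang Al q0 \<delta> F) - lang_rev (dfa_lang Al p0 \<gamma> G))
      \<le> card ((Pow {0..<m} - {{}}) \<times> (Pow {0..<n} - {{0..<n}}) \<union> {({}, {0..<n})})"
  proof (rule state_complexity_le_rev_pair[OF dK dL, where nrm = "diff_nrm n"
        and P = "\<lambda>(S, T). q0 \<in> S \<and> p0 \<notin> T"])
    show "diff_nrm n (pre_pair m \<delta> n \<gamma> (diff_nrm n (S, T)) a) = diff_nrm n (pre_pair m \<delta> n \<gamma> (S, T) a)"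
      if "a \<in> Al" for S T a
    proof (cases "S = {} \<or> T = {0..<n}")
      case True
      then have "pre_states m \<delta> S a = {} \<or> pre_states n \<gamma> T a = {0..<n}"
        by (auto simp: pre_states_empty pre_states_all[OF dL that])
      then show ?thesis
        using True by (auto simp: diff_nrm_def pre_pair_def pre_states_empty pre_states_all[OF dL that])
    qed (simp add: diff_nrm_def)
    show "u \<in> lang_rev (dfa_lang Al q0 \<delta> F) - lang_rev (dfa_lang Al p0 \<gamma> G) \<longleftrightarrow>
        (\<lambda>(S, T). q0 \<in> S \<and> p0 \<notin> T) (diff_nrm n (rev_states m \<delta> F u, rev_states n \<gamma> G u))"
      if "u \<in> lists Al" for u
      using mem_lang_rev_iff[OF dK that] mem_lang_rev_iff[OF dL that] p0
      unfolding diff_nrm_def by auto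
  qed (use lang_rev_words[of Al q0 \<delta> F] in \<open>auto simp: diff_nrm_def\<close>)
  then show ?thesis by (simp only: card_diff_states)
qed

(* Complementing both components does not change acceptance for K^R (+) L^R; represent
   each such pair by the member whose first component contains q0. *)
definition sym_nrm :: "nat \<Rightarrow> nat \<Rightarrow> nat \<Rightarrow> nat set \<times> nat set \<Rightarrow> nat set \<times> nat set" where
  "sym_nrm m n q0 ST = (if q0 \<in> fst ST then ST else ({0..<m} - fst ST, {0..<n} - snd ST))"

(* Subsets of {0..<m} containing a fixed element correspond to subsets of the other m - 1. *)
lemma card_subsets_containing:
  assumes "q0 < (m::nat)"
  shows "card {S. S \<subseteq> {0..<m} \<and> q0 \<in> S} = 2^(m - 1)"
proof -
  have "{S. S \<subseteq> {0..<m} \<and> q0 \<in> S} = insert q0 ` Pow ({0..<m} - {q0})"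
  proof (rule set_eqI, rule iffI)
    fix S assume "S \<in> {S. S \<subseteq> {0..<m} \<and> q0 \<in> S}"
    then have "S = insert q0 (S - {q0})" "S - {q0} \<in> Pow ({0..<m} - {q0})" by auto
    then show "S \<in> insert q0 ` Pow ({0..<m} - {q0})" by blast
  qed (use assms in auto)
  moreover have "inj_on (insert q0) (Pow ({0..<m} - {q0}))"
    by (rule inj_onI) (metis Diff_insert_absorb PowD insert_Diff_single subset_Diff_insert)
  ultimately show ?thesis using assms by (simp add: card_image card_Pow)
qed

lemma card_sym_states:
  assumes "q0 < (m::nat)"
  shows "card ({S. S \<subseteq> {0..<m} \<and> q0 \<in> S} \<times> Pow {0..<n}) = 2^(m + n - 1)"
proof -
  have "card ({S. S \<subseteq> {0..<m} \<and> q0 \<in> S} \<times> Pow {0..<n}) = 2^(m - 1) * 2^n"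
    using card_subsets_containing[OF assms] by (simp add: card_cartesian_product card_Pow)
  also have "\<dots> = 2^(m + n - 1)"
    using assms by (simp add: power_add[symmetric])
  finally show ?thesis .
qed

lemma state_complexity_rev_sym_diff:
  assumes dK: "is_dfa Al m q0 \<delta> F" and dL: "is_dfa Al n p0 \<gamma> G"
  shows "state_complexity Al (sym_diff (lang_rev (dfa_lang Al q0 \<delta> F)) (lang_rev (dfa_lang Al p0 \<gamma> G)))
           \<le> 2^(m + n - 1)"
proof -
  have q0: "q0 < m" and p0: "p0 < n" using dK dL by (simp_all add: is_dfa_def)
  have complement_invariant:
    "sym_nrm m n q0 ({0..<m} - S, {0..<n} - T) = sym_nrm m n q0 (S, T)"
    if "S \<subseteq> {0..<m}" "T \<subseteq> {0..<n}" for S T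
    using that q0 unfolding sym_nrm_def by (auto simp: double_diff)
  have "state_complexity Al (sym_diff (lang_rev (dfa_lang Al q0 \<delta> F)) (lang_rev (dfa_lang Al p0 \<gamma> G)))
      \<le> card ({S. S \<subseteq> {0..<m} \<and> q0 \<in> S} \<times> Pow {0..<n})"
  proof (rule state_complexity_le_rev_pair[OF dK dL, where nrm = "sym_nrm m n q0"
        and P = "\<lambda>(S, T). (q0 \<in> S) \<noteq> (p0 \<in> T)"])
    show "sym_nrm m n q0 (pre_pair m \<delta> n \<gamma> (sym_nrm m n q0 (S, T)) a)
        = sym_nrm m n q0 (pre_pair m \<delta> n \<gamma> (S, T) a)" if "a \<in> Al" for S T a
    proof (cases "q0 \<in> S")
      case False
      then have "pre_pair m \<delta> n \<gamma> (sym_nrm m n q0 (S, T)) a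
          = ({0..<m} - pre_states m \<delta> S a, {0..<n} - pre_states n \<gamma> T a)"
        by (simp add: sym_nrm_def pre_pair_def pre_states_complement[OF dK that]
            pre_states_complement[OF dL that])
      then show ?thesis
        using complement_invariant[OF pre_states_subset pre_states_subset]
        by (simp add: pre_pair_def)
    qed (simp add: sym_nrm_def)
    show "u \<in> sym_diff (lang_rev (dfa_lang Al q0 \<delta> F)) (lang_rev (dfa_lang Al p0 \<gamma> G)) \<longleftrightarrow>
        (\<lambda>(S, T). (q0 \<in> S) \<noteq> (p0 \<in> T)) (sym_nrm m n q0 (rev_states m \<delta> F u, rev_states n \<gamma> G u))"
      if "u \<in> lists Al" for u
      using mem_lang_rev_iff[OF dK that] mem_lang_rev_iff[OF dL that] q0 p0
      unfolding sym_nrm_def sym_diff_def by auto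
  qed (use q0 lang_rev_words[of Al q0 \<delta> F] lang_rev_words[of Al p0 \<gamma> G]
       in \<open>auto simp: sym_nrm_def sym_diff_def\<close>)
  then show ?thesis by (simp only: card_sym_states[OF q0])
qed

theorem proposition2:
  fixes Al :: "'a set" and K L :: "'a list set" and m n :: nat
  assumes "finite Al"
    and "regular_lang Al K" and "regular_lang Al L"
    and "state_complexity Al K = m" and "state_complexity Al L = n"
  shows "state_complexity Al (lang_rev K - lang_rev L) \<le> (2^m - 1) * (2^n - 1) + 1
       \<and> state_complexity Al (sym_diff (lang_rev K) (lang_rev L)) \<le> 2^(m + n - 1)"
proof -
  obtain q0 \<delta> F where dK: "is_dfa Al m q0 \<delta> F" and K: "dfa_lang Al q0 \<delta> F = K"
    using accepted_with_state_complexity[OF assms(2)] assms(4)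
    unfolding accepted_with_def by blast
  obtain p0 \<gamma> G where dL: "is_dfa Al n p0 \<gamma> G" and L: "dfa_lang Al p0 \<gamma> G = L"
    using accepted_with_state_complexity[OF assms(3)] assms(5)
    unfolding accepted_with_def by blast
  show ?thesis
    using state_complexity_rev_diff[OF dK dL] state_complexity_rev_sym_diff[OF dK dL]
    unfolding K L by blast
qed

end
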